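(* Let $G$ be a connected chordal graph that is not complete. Then $\kappa(G)=a(G)$ if and only if $G$ has a minimal separator $S$ such that every vertex of $S$ is a universal vertex of $G$.
   Context: All graphs are finite, simple and undirected. A graph is chordal if every cycle of length at least four has a chord. The Laplacian matrix of $G$ is $L(G)=D(G)-A(G)$, where $D(G)$ is the diagonal matrix of vertex degrees and $A(G)$ the adjacency matrix; its eigenvalues are $\mu_1(G)\ge\dots\ge\mu_n(G)=0$. The algebraic connectivity is $a(G)=\mu_{n-1}(G)$. A set $S\subset V$ is a separator of $G$ if at least two vertices lying in the same connected component of $G$ lie in distinct connected components of $G[V\setminus S]$; $S$ is a minimal separator if it is a separator and no proper subset of $S$ is a separator. The vertex connectivity $\kappa(G)$ is the minimum cardinality of a separator of $G$. A vertex is universal if it is adjacent to all other vertices. *)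

theory Defs
  imports "Jordan_Normal_Form.Char_Poly"
begin

(* A finite simple graph on vertex set {0..<n} with symmetric irreflexive adjacency E
   (only the values of E on {0..<n} matter). *)
definition simple_graph :: "nat \<Rightarrow> (nat \<Rightarrow> nat \<Rightarrow> bool) \<Rightarrow> bool" where
  "simple_graph n E \<longleftrightarrow> (\<forall>u<n. \<forall>v<n. E u v \<longleftrightarrow> E v u) \<and> (\<forall>u<n. \<not> E u u)"

definition reach_in :: "(nat \<Rightarrow> nat \<Rightarrow> bool) \<Rightarrow> nat set \<Rightarrow> nat \<Rightarrow> nat \<Rightarrow> bool" where
  "reach_in E U u v \<longleftrightarrow> u \<in> U \<and> v \<in> U \<and> (u, v) \<in> {(x, y). x \<in> U \<and> y \<in> U \<and> E x y}\<^sup>*"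

definition connected_graph :: "nat \<Rightarrow> (nat \<Rightarrow> nat \<Rightarrow> bool) \<Rightarrow> bool" where
  "connected_graph n E \<longleftrightarrow> (\<forall>u<n. \<forall>v<n. reach_in E {..<n} u v)"

definition complete_graph :: "nat \<Rightarrow> (nat \<Rightarrow> nat \<Rightarrow> bool) \<Rightarrow> bool" where
  "complete_graph n E \<longleftrightarrow> (\<forall>u<n. \<forall>v<n. u \<noteq> v \<longrightarrow> E u v)"

definition universal_vertex :: "nat \<Rightarrow> (nat \<Rightarrow> nat \<Rightarrow> bool) \<Rightarrow> nat \<Rightarrow> bool" where
  "universal_vertex n E v \<longleftrightarrow> v < n \<and> (\<forall>u<n. u \<noteq> v \<longrightarrow> E v u)"

definition is_cycle :: "nat \<Rightarrow> (nat \<Rightarrow> nat \<Rightarrow> bool) \<Rightarrow> nat list \<Rightarrow> bool" where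
  "is_cycle n E cs \<longleftrightarrow> length cs \<ge> 3 \<and> distinct cs \<and> set cs \<subseteq> {..<n} \<and>
     (\<forall>i<length cs. E (cs ! i) (cs ! ((i + 1) mod length cs)))"

definition has_chord :: "(nat \<Rightarrow> nat \<Rightarrow> bool) \<Rightarrow> nat list \<Rightarrow> bool" where
  "has_chord E cs \<longleftrightarrow> (\<exists>i<length cs. \<exists>j<length cs. i \<noteq> j \<and>
     j \<noteq> (i + 1) mod length cs \<and> i \<noteq> (j + 1) mod length cs \<and> E (cs ! i) (cs ! j))"

definition chordal :: "nat \<Rightarrow> (nat \<Rightarrow> nat \<Rightarrow> bool) \<Rightarrow> bool" where
  "chordal n E \<longleftrightarrow> (\<forall>cs. is_cycle n E cs \<and> length cs \<ge> 4 \<longrightarrow> has_chord E cs)"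

definition separator :: "nat \<Rightarrow> (nat \<Rightarrow> nat \<Rightarrow> bool) \<Rightarrow> nat set \<Rightarrow> bool" where
  "separator n E S \<longleftrightarrow> S \<subseteq> {..<n} \<and>
     (\<exists>u v. u \<in> {..<n} - S \<and> v \<in> {..<n} - S \<and> reach_in E {..<n} u v \<and>
            \<not> reach_in E ({..<n} - S) u v)"

definition minimal_separator :: "nat \<Rightarrow> (nat \<Rightarrow> nat \<Rightarrow> bool) \<Rightarrow> nat set \<Rightarrow> bool" where
  "minimal_separator n E S \<longleftrightarrow> separator n E S \<and> (\<forall>T. T \<subset> S \<longrightarrow> \<not> separator n E T)"

definition vertex_connectivity :: "nat \<Rightarrow> (nat \<Rightarrow> nat \<Rightarrow> bool) \<Rightarrow> nat" where
  "vertex_connectivity n E = Min {card S | S. separator n E S}"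

definition laplacian :: "nat \<Rightarrow> (nat \<Rightarrow> nat \<Rightarrow> bool) \<Rightarrow> real mat" where
  "laplacian n E = mat n n (\<lambda>(i, j). if i = j then real (card {k. k < n \<and> E i k})
                                       else if E i j then -1 else 0)"

(* Laplacian eigenvalues with multiplicity, sorted increasingly:
   mu_n = 0 <= mu_{n-1} <= ... <= mu_1 *)
definition laplacian_eigenvalues :: "nat \<Rightarrow> (nat \<Rightarrow> nat \<Rightarrow> bool) \<Rightarrow> real list" where
  "laplacian_eigenvalues n E =
     (THE xs. sorted xs \<and> char_poly (laplacian n E) = (\<Prod>a\<leftarrow>xs. [:- a, 1:]))"

(* algebraic connectivity a(G) = mu_{n-1}(G), the second smallest Laplacian eigenvalue *)
definition algebraic_connectivity :: "nat \<Rightarrow> (nat \<Rightarrow> nat \<Rightarrow> bool) \<Rightarrow> real" where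
  "algebraic_connectivity n E = laplacian_eigenvalues n E ! 1"

end

theory Submission
  imports Defs "Jordan_Normal_Form.Schur_Decomposition"
begin

text \<open>
  By the spectral theorem and Courant-Fischer, a(G) is the largest a such that
  a \<cdot> \<Sum>f(v)^2 is at most \<Sum>(f(u) - f(v))^2 over the edges uv, for every f orthogonal to the
  all-ones vector. If S is a separator, split G - S into a component C and the rest D; the test
  function that is |D| on C, -|C| on D and 0 on S shows a(G) \<le> |S|, strictly so unless every
  vertex of S is adjacent to every vertex outside S. Applied to a minimum separator, a(G) = \<kappa>(G)
  thus forces all edges between S and its complement, and in a chordal graph S is then also a
  clique: two non-adjacent vertices of S together with vertices of two components of G - S would
  span a chordless 4-cycle. Conversely, if all vertices of S are universal, every pair of
  distinct vertices meeting S is an edge, and summing (f(u) - f(v))^2 over these pairs alone gives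
  a(G) \<ge> |S| \<ge> \<kappa>(G).
\<close>

section \<open>Orthogonal diagonalization of real symmetric matrices\<close>

definition orthogonal_diagonalization :: "nat \<Rightarrow> real mat \<Rightarrow> real mat \<Rightarrow> real list \<Rightarrow> bool" where
  "orthogonal_diagonalization n A U ds \<longleftrightarrow>
     U \<in> carrier_mat n n \<and> transpose_mat U * U = 1\<^sub>m n \<and> length ds = n \<and>
     transpose_mat U * A * U = mat_diag n (\<lambda>i. ds ! i)"

lemma real_scalar_prod_self_pos:
  fixes v :: "real vec"
  assumes "v \<in> carrier_vec n" "v \<noteq> 0\<^sub>v n"
  shows "v \<bullet> v > 0"
proof -
  have "v \<bullet>c v > 0" using assms conjugate_square_greater_0_vec by blast
  thus ?thesis by (simp add: scalar_prod_def)
qed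

lemma symmetric_mat_entry:
  assumes "A \<in> carrier_mat n n" "transpose_mat A = A" "i < n" "j < n"
  shows "A $$ (i, j) = A $$ (j, i)"
  using assms by (metis carrier_matD index_transpose_mat(1))

lemma symmetric_real_mat_eigenvalue_real:
  fixes A :: "real mat" and w :: "complex vec"
  assumes A: "A \<in> carrier_mat n n" and sym: "transpose_mat A = A"
    and w: "w \<in> carrier_vec n" "w \<noteq> 0\<^sub>v n" and ev: "map_mat complex_of_real A *\<^sub>v w = a \<cdot>\<^sub>v w"
  shows "Im a = 0"
proof -
  have row: "(\<Sum>j<n. complex_of_real (A $$ (i, j)) * w $ j) = a * w $ i" if "i < n" for i
  proof -
    have "(map_mat complex_of_real A *\<^sub>v w) $ i = a * w $ i" using ev that w by simp
    thus ?thesis using A w that by (simp add: scalar_prod_def row_def atLeast0LessThan)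
  qed
  \<comment> \<open>s = w^* A w is its own conjugate, and it equals a |w|^2\<close>
  define N where "N = (\<Sum>i<n. cnj (w $ i) * w $ i)"
  define s where "s = (\<Sum>i<n. cnj (w $ i) * (\<Sum>j<n. complex_of_real (A $$ (i, j)) * w $ j))"
  have s_eq: "s = a * N" unfolding s_def N_def using row
    by (simp add: sum_distrib_left mult.commute mult.left_commute)
  have "cnj s = (\<Sum>i<n. \<Sum>j<n. w $ i * complex_of_real (A $$ (i, j)) * cnj (w $ j))"
    unfolding s_def by (simp add: sum_distrib_left mult.assoc)
  also have "\<dots> = (\<Sum>j<n. \<Sum>i<n. w $ i * complex_of_real (A $$ (i, j)) * cnj (w $ j))"
    by (rule sum.swap)
  also have "\<dots> = s" unfolding s_def
    by (auto simp: sum_distrib_left symmetric_mat_entry[OF A sym] mult.commute mult.left_commute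
        intro!: sum.cong)
  finally have s_real: "cnj s = s" .
  have N_eq: "N = complex_of_real (\<Sum>i<n. (cmod (w $ i))\<^sup>2)" unfolding N_def of_real_sum
    by (intro sum.cong refl) (metis complex_norm_square mult.commute)
  obtain i where i: "i < n" "w $ i \<noteq> 0"
    using w by (metis eq_vecI carrier_vecD index_zero_vec)
  have "(\<Sum>i<n. (cmod (w $ i))\<^sup>2) > 0"
    by (rule sum_pos2[of _ i]) (use i in auto)
  hence "N \<noteq> 0" unfolding N_eq by (metis of_real_eq_0_iff less_irrefl)
  moreover have "cnj N = N" unfolding N_eq by (simp only: complex_cnj_complex_of_real)
  ultimately have "cnj a = a" using s_real s_eq by simp
  thus ?thesis by (metis cnj.simps(2) neg_equal_zero)
qed

lemma symmetric_real_mat_unit_eigenvector: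
  fixes A :: "real mat"
  assumes A: "A \<in> carrier_mat n n" and sym: "transpose_mat A = A" and n: "n > 0"
  shows "\<exists>e u. u \<in> carrier_vec n \<and> u \<bullet> u = 1 \<and> A *\<^sub>v u = e \<cdot>\<^sub>v u"
proof -
  let ?C = "map_mat complex_of_real A"
  have C: "?C \<in> carrier_mat n n" using A by simp
  obtain as where as: "char_poly ?C = (\<Prod>a\<leftarrow>as. [:- a, 1:])" "length as = n"
    using char_poly_factorized[OF C] by blast
  then obtain a where "a \<in> set as" using n by (cases as) auto
  hence root: "poly (char_poly ?C) a = 0" unfolding as(1)
    by (simp add: poly_prod_list)
  then obtain w where "eigenvector ?C w a"
    using eigenvalue_root_char_poly[OF C] unfolding eigenvalue_def by blast
  hence "w \<in> carrier_vec n" "w \<noteq> 0\<^sub>v n" "?C *\<^sub>v w = a \<cdot>\<^sub>v w"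
    unfolding eigenvector_def using C by auto
  hence a_real: "a = complex_of_real (Re a)"
    using symmetric_real_mat_eigenvalue_real[OF A sym] by (simp add: complex_eq_iff)
  have "char_poly ?C = map_poly complex_of_real (char_poly A)"
    using of_real_hom.char_poly_hom[OF A] by simp
  hence "complex_of_real (poly (char_poly A) (Re a)) = 0"
    using root a_real by (metis of_real_hom.poly_map_poly)
  hence "eigenvalue A (Re a)" using eigenvalue_root_char_poly[OF A] by simp
  then obtain v where "v \<in> carrier_vec n" "v \<noteq> 0\<^sub>v n" "A *\<^sub>v v = Re a \<cdot>\<^sub>v v"
    unfolding eigenvalue_def eigenvector_def using A by auto
  moreover define u where "u = (1 / sqrt (v \<bullet> v)) \<cdot>\<^sub>v v"
  moreover note real_scalar_prod_self_pos[of v n]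
  ultimately have "u \<in> carrier_vec n" "u \<bullet> u = 1" "A *\<^sub>v u = Re a \<cdot>\<^sub>v u"
    using A by (auto simp: real_sqrt_mult[symmetric] mult_mat_vec smult_smult_assoc mult.commute)
  thus ?thesis by blast
qed

lemma orthonormal_mat_of_corthogonal:
  fixes ws :: "real vec list"
  assumes ws: "set ws \<subseteq> carrier_vec n" "corthogonal ws" "length ws = n"
  shows "\<exists>W \<in> carrier_mat n n. transpose_mat W * W = 1\<^sub>m n \<and>
    (\<forall>i<n. col W i = (1 / sqrt (ws ! i \<bullet> ws ! i)) \<cdot>\<^sub>v ws ! i)"
proof -
  have ws_carrier: "ws ! i \<in> carrier_vec n" if "i < n" for i using ws that by auto
  have ws_orth: "ws ! i \<bullet> ws ! j = 0 \<longleftrightarrow> i \<noteq> j" if "i < n" "j < n" for i j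
    using corthogonalD[OF ws(2)] that ws(3) by (auto simp: scalar_prod_def)
  have ws_pos: "ws ! i \<bullet> ws ! i > 0" if "i < n" for i
  proof (rule real_scalar_prod_self_pos[OF ws_carrier[OF that]])
    show "ws ! i \<noteq> 0\<^sub>v n" using ws_orth[OF that that] ws_carrier[OF that] by auto
  qed
  define vs where "vs = map (\<lambda>w. (1 / sqrt (w \<bullet> w)) \<cdot>\<^sub>v w) ws"
  have vs_carrier: "vs ! i \<in> carrier_vec n" if "i < n" for i
    unfolding vs_def using that ws_carrier ws(3) by simp
  have vs_orthonormal: "vs ! i \<bullet> vs ! j = (if i = j then 1 else 0)" if "i < n" "j < n" for i j
  proof -
    have "vs ! i \<bullet> vs ! j = (ws ! i \<bullet> ws ! j) / (sqrt (ws ! i \<bullet> ws ! i) * sqrt (ws ! j \<bullet> ws ! j))"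
      unfolding vs_def using that ws(3) ws_carrier[OF that(1)] ws_carrier[OF that(2)] by simp
    thus ?thesis using ws_orth[OF that] ws_pos[OF that(1)]
      by (cases "i = j") (auto simp: real_sqrt_mult[symmetric])
  qed
  define W where "W = mat_of_cols n vs"
  have W: "W \<in> carrier_mat n n"
    unfolding W_def using mat_of_cols_carrier(1)[of n vs] ws(3) by (simp add: vs_def)
  have col_W: "col W i = vs ! i" if "i < n" for i
    unfolding W_def using that vs_carrier ws(3) by (simp add: vs_def)
  have "transpose_mat W * W = 1\<^sub>m n"
    by (rule eq_matI) (use W in \<open>auto simp: col_W vs_orthonormal\<close>)
  thus ?thesis using W col_W ws(3) unfolding vs_def by auto
qed

lemma orthonormal_completion:
  fixes u :: "real vec"
  assumes u: "u \<in> carrier_vec n" "u \<bullet> u = 1"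
  shows "\<exists>W \<in> carrier_mat n n. transpose_mat W * W = 1\<^sub>m n \<and> col W 0 = u"
proof -
  have u0: "u \<noteq> 0\<^sub>v n" using u by auto
  have "n > 0" using u by (cases n) (auto simp: scalar_prod_def)
  interpret cof_vec_space n "TYPE(real)" .
  obtain us where bu: "basis_completion u = u # us" and len_b: "length (basis_completion u) = n"
    using basis_completion[OF u(1) u0] \<open>n > 0\<close> by (cases "basis_completion u") auto
  have b: "set (basis_completion u) \<subseteq> carrier_vec n" "distinct (basis_completion u)"
    "\<not> lin_dep (set (basis_completion u))" using basis_completion[OF u(1) u0] by auto
  define ws where "ws = gram_schmidt n (basis_completion u)"
  have ws: "set ws \<subseteq> carrier_vec n" "corthogonal ws" "length ws = n"
    using gram_schmidt_result[OF b refl, folded ws_def] by (auto simp: len_b)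
  have "ws ! 0 = u"
    using gram_schmidt_hd[OF u(1), of us] ws(3) \<open>n > 0\<close> unfolding ws_def bu
    by (metis hd_conv_nth list.size(3) not_less_zero)
  thus ?thesis using orthonormal_mat_of_corthogonal[OF ws] \<open>n > 0\<close> u(2) by auto
qed

lemma transpose_congruence_symmetric:
  fixes A W :: "'a :: comm_semiring_0 mat"
  assumes "A \<in> carrier_mat n n" "transpose_mat A = A" "W \<in> carrier_mat n m"
  shows "transpose_mat (transpose_mat W * A * W) = transpose_mat W * A * W"
proof -
  have "transpose_mat (transpose_mat W * A * W) = transpose_mat W * transpose_mat (transpose_mat W * A)"
    using assms transpose_mult[of "transpose_mat W * A" m n W m] by auto
  also have "transpose_mat (transpose_mat W * A) = transpose_mat A * W"
    using assms transpose_mult[of "transpose_mat W" m n A n] by auto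
  finally show ?thesis using assms by (simp add: assoc_mult_mat[of _ m n _ n _ m])
qed

lemma one_by_one_block_mult:
  fixes x y :: real
  assumes "B \<in> carrier_mat m m" "C \<in> carrier_mat m m"
  shows "four_block_mat (mat 1 1 (\<lambda>_. x)) (0\<^sub>m 1 m) (0\<^sub>m m 1) B *
      four_block_mat (mat 1 1 (\<lambda>_. y)) (0\<^sub>m 1 m) (0\<^sub>m m 1) C =
      four_block_mat (mat 1 1 (\<lambda>_. x * y)) (0\<^sub>m 1 m) (0\<^sub>m m 1) (B * C)"
  using assms by (subst mult_four_block_mat[of _ 1 1 _ m _ m _ _ 1 _ m])
    (auto simp: scalar_prod_def intro!: eq_matI)

lemma orthogonal_deflation:
  fixes A :: "real mat"
  assumes A: "A \<in> carrier_mat (Suc m) (Suc m)" and sym: "transpose_mat A = A"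
    and W: "W \<in> carrier_mat (Suc m) (Suc m)" "transpose_mat W * W = 1\<^sub>m (Suc m)"
    and u: "col W 0 = u" "A *\<^sub>v u = e \<cdot>\<^sub>v u"
  shows "\<exists>A3 \<in> carrier_mat m m. transpose_mat A3 = A3 \<and>
    transpose_mat W * A * W = four_block_mat (mat 1 1 (\<lambda>_. e)) (0\<^sub>m 1 m) (0\<^sub>m m 1) A3"
proof -
  let ?n = "Suc m"
  define A' where "A' = transpose_mat W * A * W"
  have A': "A' \<in> carrier_mat ?n ?n" unfolding A'_def using W A by auto
  have A'_sym: "transpose_mat A' = A'"
    unfolding A'_def by (rule transpose_congruence_symmetric[OF A sym W(1)])
  have col0: "A' $$ (i, 0) = (if i = 0 then e else 0)" if i: "i < ?n" for i
  proof -
    have "A' $$ (i, 0) = col W i \<bullet> (A *\<^sub>v col W 0)"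
      unfolding A'_def using W(1) A i
      by (simp add: assoc_mult_mat[of _ ?n ?n _ ?n _ ?n] mult_mat_vec_def)
    also have "\<dots> = e * (col W i \<bullet> col W 0)"
      using W(1) i u scalar_prod_smult_right[of "col W i" u e] by auto
    also have "col W i \<bullet> col W 0 = (transpose_mat W * W) $$ (i, 0)" using W(1) i by simp
    finally show ?thesis using W(2) i by simp
  qed
  define A3 where "A3 = mat m m (\<lambda>(i, j). A' $$ (Suc i, Suc j))"
  have "transpose_mat A3 = A3" unfolding A3_def
    by (rule eq_matI) (auto simp: symmetric_mat_entry[OF A' A'_sym])
  moreover have "A' = four_block_mat (mat 1 1 (\<lambda>_. e)) (0\<^sub>m 1 m) (0\<^sub>m m 1) A3"
    by (rule eq_matI)
      (use A' in \<open>auto simp: A3_def col0 symmetric_mat_entry[OF A' A'_sym, of 0] less_Suc_eq_0_disj\<close>)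
  ultimately show ?thesis unfolding A'_def A3_def by auto
qed

lemma orthogonal_diagonalization_extend:
  fixes A :: "real mat"
  assumes A: "A \<in> carrier_mat (Suc m) (Suc m)"
    and W: "W \<in> carrier_mat (Suc m) (Suc m)" "transpose_mat W * W = 1\<^sub>m (Suc m)"
    and block: "transpose_mat W * A * W = four_block_mat (mat 1 1 (\<lambda>_. e)) (0\<^sub>m 1 m) (0\<^sub>m m 1) A3"
    and A3: "A3 \<in> carrier_mat m m" and U3: "orthogonal_diagonalization m A3 U3 ds3"
  shows "orthogonal_diagonalization (Suc m) A
    (W * four_block_mat (mat 1 1 (\<lambda>_. 1)) (0\<^sub>m 1 m) (0\<^sub>m m 1) U3) (e # ds3)"
proof -
  let ?n = "Suc m"
  define Q where "Q = four_block_mat (mat 1 1 (\<lambda>_. 1)) (0\<^sub>m 1 m) (0\<^sub>m m 1) U3"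
  have U3_carrier: "U3 \<in> carrier_mat m m" using U3 unfolding orthogonal_diagonalization_def by simp
  have Q: "Q \<in> carrier_mat ?n ?n" unfolding Q_def
    using four_block_carrier_mat[OF _ U3_carrier, of "mat 1 1 (\<lambda>_. 1)" 1 1] by simp
  have Q_transpose:
    "transpose_mat Q = four_block_mat (mat 1 1 (\<lambda>_. 1)) (0\<^sub>m 1 m) (0\<^sub>m m 1) (transpose_mat U3)"
    unfolding Q_def by (subst transpose_four_block_mat[of _ 1 1 _ m _ m]) (use U3_carrier in auto)
  have WQ_transpose: "transpose_mat (W * Q) = transpose_mat Q * transpose_mat W"
    using W Q by (simp add: transpose_mult[of _ ?n ?n])
  have "transpose_mat (W * Q) * (W * Q) = transpose_mat Q * (transpose_mat W * W) * Q"
    unfolding WQ_transpose using W(1) Q by (simp add: assoc_mult_mat[of _ ?n ?n _ ?n _ ?n])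
  also have "\<dots> = transpose_mat Q * Q" using W(2) Q by simp
  also have "\<dots> = four_block_mat (mat 1 1 (\<lambda>_. 1)) (0\<^sub>m 1 m) (0\<^sub>m m 1) (transpose_mat U3 * U3)"
    unfolding Q_transpose using one_by_one_block_mult[of "transpose_mat U3" m U3 1 1] U3_carrier
    by (simp add: Q_def)
  also have "\<dots> = 1\<^sub>m ?n"
    using U3 by (auto simp: orthogonal_diagonalization_def intro!: eq_matI)
  finally have orth: "transpose_mat (W * Q) * (W * Q) = 1\<^sub>m ?n" .
  have "transpose_mat (W * Q) * A * (W * Q) = transpose_mat Q * (transpose_mat W * A * W) * Q"
    unfolding WQ_transpose using W(1) Q A by (simp add: assoc_mult_mat[of _ ?n ?n _ ?n _ ?n])
  also have "\<dots> = four_block_mat (mat 1 1 (\<lambda>_. e)) (0\<^sub>m 1 m) (0\<^sub>m m 1) (transpose_mat U3 * A3 * U3)"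
    unfolding block Q_transpose
    using one_by_one_block_mult[of "transpose_mat U3" m A3 1 e]
      one_by_one_block_mult[of "transpose_mat U3 * A3" m U3 e 1] U3_carrier A3
    by (simp add: Q_def)
  also have "\<dots> = mat_diag ?n (\<lambda>i. (e # ds3) ! i)"
    using U3 by (auto simp: orthogonal_diagonalization_def mat_diag_def less_Suc_eq_0_disj
        split: if_splits intro!: eq_matI)
  finally show ?thesis
    using orth W(1) Q U3 unfolding orthogonal_diagonalization_def Q_def[symmetric] by auto
qed

lemma symmetric_real_mat_orthogonal_diagonalization:
  fixes A :: "real mat"
  assumes "A \<in> carrier_mat n n" "transpose_mat A = A"
  shows "\<exists>U ds. orthogonal_diagonalization n A U ds"
  using assms
proof (induction n arbitrary: A)
  case 0
  then show ?case unfolding orthogonal_diagonalization_def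
    by (intro exI[of _ "1\<^sub>m 0"] exI[of _ "[]"]) (auto simp: mat_diag_def)
next
  case (Suc m A)
  obtain e u where u: "u \<in> carrier_vec (Suc m)" "u \<bullet> u = 1" "A *\<^sub>v u = e \<cdot>\<^sub>v u"
    using symmetric_real_mat_unit_eigenvector[OF Suc.prems] by auto
  obtain W where W: "W \<in> carrier_mat (Suc m) (Suc m)" "transpose_mat W * W = 1\<^sub>m (Suc m)" "col W 0 = u"
    using orthonormal_completion[OF u(1,2)] by blast
  obtain A3 where A3: "A3 \<in> carrier_mat m m" "transpose_mat A3 = A3"
    "transpose_mat W * A * W = four_block_mat (mat 1 1 (\<lambda>_. e)) (0\<^sub>m 1 m) (0\<^sub>m m 1) A3"
    using orthogonal_deflation[OF Suc.prems W(1,2) W(3) u(3)] by blast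
  obtain U3 ds3 where "orthogonal_diagonalization m A3 U3 ds3" using Suc.IH[OF A3(1,2)] by blast
  from orthogonal_diagonalization_extend[OF Suc.prems(1) W(1,2) A3(3,1) this] show ?case by blast
qed

lemma orthogonal_diagonalization_right_inverse:
  assumes "orthogonal_diagonalization n A U ds"
  shows "U * transpose_mat U = 1\<^sub>m n"
  using assms mat_mult_left_right_inverse[of "transpose_mat U" n U]
  unfolding orthogonal_diagonalization_def by auto

lemma orthogonal_diagonalization_char_poly:
  assumes A: "A \<in> carrier_mat n n" and U: "orthogonal_diagonalization n A U ds"
  shows "char_poly A = (\<Prod>a\<leftarrow>ds. [:- a, 1:])"
proof -
  let ?D = "mat_diag n (\<lambda>i. ds ! i)"
  have U_carrier: "U \<in> carrier_mat n n" and UAU: "transpose_mat U * A * U = ?D"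
    and len: "length ds = n" using U unfolding orthogonal_diagonalization_def by auto
  have UU: "U * transpose_mat U = 1\<^sub>m n" by (rule orthogonal_diagonalization_right_inverse[OF U])
  have "U * ?D * transpose_mat U = (U * transpose_mat U) * A * (U * transpose_mat U)"
    unfolding UAU[symmetric] using U_carrier A by (simp add: assoc_mult_mat[of _ n n _ n _ n])
  hence "A = U * ?D * transpose_mat U" unfolding UU using A by simp
  hence "similar_mat A ?D" unfolding similar_mat_def similar_mat_wit_def
    using U_carrier UU U by (intro exI[of _ U] exI[of _ "transpose_mat U"])
      (auto simp: Let_def orthogonal_diagonalization_def)
  hence "char_poly A = char_poly ?D" by (rule char_poly_similar)
  also have "\<dots> = (\<Prod>a\<leftarrow>diag_mat ?D. [:- a, 1:])"
    by (rule char_poly_upper_triangular) (auto simp: mat_diag_def)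
  also have "diag_mat ?D = ds" using len by (intro nth_equalityI) (auto simp: diag_mat_def mat_diag_def)
  finally show ?thesis .
qed

lemma linear_factors_eq_imp_mset_eq:
  fixes xs ys :: "'a :: idom list"
  assumes "(\<Prod>a\<leftarrow>xs. [:- a, 1:]) = (\<Prod>a\<leftarrow>ys. [:- a, 1:])"
  shows "mset xs = mset ys"
  using assms
proof (induction xs arbitrary: ys)
  case Nil
  thus ?case using degree_linear_factors[of uminus ys] by simp
next
  case (Cons x xs ys)
  have "poly (\<Prod>a\<leftarrow>ys. [:- a, 1:]) x = 0" using Cons.prems[symmetric] by simp
  hence x: "x \<in> set ys" by (auto simp: poly_prod_list)
  hence "(\<Prod>a\<leftarrow>ys. [:- a, 1:]) = [:- x, 1:] * (\<Prod>a\<leftarrow>remove1 x ys. [:- a, 1:])"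
    by (rule prod_list_map_remove1)
  with Cons.prems have "(\<Prod>a\<leftarrow>xs. [:- a, 1:]) = (\<Prod>a\<leftarrow>remove1 x ys. [:- a, 1:])"
    by (simp del: mult_pCons_left)
  hence "mset xs = mset (remove1 x ys)" by (rule Cons.IH)
  thus ?case using x by simp
qed

lemma sorted_linear_factorization_unique:
  fixes ds :: "'a :: {idom, linorder} list"
  assumes "p = (\<Prod>a\<leftarrow>ds. [:- a, 1:])"
  shows "(THE xs. sorted xs \<and> p = (\<Prod>a\<leftarrow>xs. [:- a, 1:])) = sort ds"
proof (rule the_equality)
  have "mset (map (\<lambda>a. [:- a, 1:]) (sort ds)) = mset (map (\<lambda>a. [:- a, 1:]) ds)" by simp
  hence "(\<Prod>a\<leftarrow>sort ds. [:- a, 1:]) = (\<Prod>a\<leftarrow>ds. [:- a, 1:])" by (metis prod_mset_prod_list)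
  thus "sorted (sort ds) \<and> p = (\<Prod>a\<leftarrow>sort ds. [:- a, 1:])" using assms by simp
next
  fix xs assume xs: "sorted xs \<and> p = (\<Prod>a\<leftarrow>xs. [:- a, 1:])"
  hence "mset xs = mset ds" using assms linear_factors_eq_imp_mset_eq by metis
  thus "xs = sort ds" using xs by (metis properties_for_sort)
qed

lemma orthogonal_diagonalization_quadratic_form:
  assumes A: "A \<in> carrier_mat n n" and U: "orthogonal_diagonalization n A U ds"
    and c: "c \<in> carrier_vec n"
  shows "(U *\<^sub>v c) \<bullet> (A *\<^sub>v (U *\<^sub>v c)) = (\<Sum>i<n. ds ! i * (c $ i)\<^sup>2)"
    and "(U *\<^sub>v c) \<bullet> (U *\<^sub>v c) = c \<bullet> c"
proof -
  have U_carrier: "U \<in> carrier_mat n n" and UU: "transpose_mat U * U = 1\<^sub>m n"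
    and UAU: "transpose_mat U * A * U = mat_diag n (\<lambda>i. ds ! i)"
    using U unfolding orthogonal_diagonalization_def by auto
  have move: "(U *\<^sub>v c) \<bullet> w = c \<bullet> (transpose_mat U *\<^sub>v w)" if "w \<in> carrier_vec n" for w
    using transpose_vec_mult_scalar[of "transpose_mat U" n n w c] U_carrier that c by simp
  have "(U *\<^sub>v c) \<bullet> (A *\<^sub>v (U *\<^sub>v c)) = c \<bullet> (mat_diag n (\<lambda>i. ds ! i) *\<^sub>v c)"
    unfolding UAU[symmetric] using move[of "A *\<^sub>v (U *\<^sub>v c)"] A U_carrier c
    by (simp add: assoc_mult_mat_vec[of _ n n _ n])
  also have "\<dots> = (\<Sum>i<n. ds ! i * (c $ i)\<^sup>2)"
    using c by (auto simp: mat_diag_def scalar_prod_def atLeast0LessThan power2_eq_square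
        if_distrib[of "\<lambda>x. x * _"] sum.delta cong: if_cong intro!: sum.cong)
  finally show "(U *\<^sub>v c) \<bullet> (A *\<^sub>v (U *\<^sub>v c)) = (\<Sum>i<n. ds ! i * (c $ i)\<^sup>2)" .
  have "(U *\<^sub>v c) \<bullet> (U *\<^sub>v c) = c \<bullet> ((transpose_mat U * U) *\<^sub>v c)"
    using move[of "U *\<^sub>v c"] U_carrier c by (simp add: assoc_mult_mat_vec[of _ n n _ n])
  thus "(U *\<^sub>v c) \<bullet> (U *\<^sub>v c) = c \<bullet> c" unfolding UU using c by simp
qed

section \<open>The second smallest eigenvalue and Rayleigh quotients\<close>

lemma card_nth_sort:
  "card {i. i < length xs \<and> P (sort xs ! i)} = card {i. i < length xs \<and> P (xs ! i)}"
  using length_filter_conv_card[of P xs] length_filter_conv_card[of P "sort xs"]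
  by (simp add: filter_sort)

lemma all_but_one_ge_second_smallest:
  fixes xs :: "'a :: linorder list"
  shows "\<exists>i0. \<forall>i<length xs. i \<noteq> i0 \<longrightarrow> sort xs ! 1 \<le> xs ! i"
proof -
  let ?below = "{i. i < length xs \<and> xs ! i < sort xs ! 1}"
  have "{i. i < length xs \<and> sort xs ! i < sort xs ! 1} \<subseteq> {0}"
  proof (intro subsetI, clarify)
    fix i assume i: "i < length xs" "sort xs ! i < sort xs ! 1"
    show "i = 0"
    proof (rule ccontr)
      assume "i \<noteq> 0"
      hence "sort xs ! 1 \<le> sort xs ! i" using i(1) sorted_nth_mono[OF sorted_sort[of xs], of 1 i] by simp
      thus False using i(2) by simp
    qed
  qed
  hence "card {i. i < length xs \<and> sort xs ! i < sort xs ! 1} \<le> card {0 :: nat}"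
    by (intro card_mono) auto
  hence "card ?below \<le> Suc 0" using card_nth_sort[of xs "\<lambda>a. a < sort xs ! 1"] by simp
  hence single: "\<forall>a \<in> ?below. \<forall>b \<in> ?below. a = b" by (simp add: card_le_Suc0_iff_eq)
  show ?thesis
  proof (cases "?below = {}")
    case True
    thus ?thesis by (metis (mono_tags, lifting) empty_Collect_eq not_less)
  next
    case False
    then obtain i0 where "i0 \<in> ?below" by blast
    thus ?thesis using single by (metis (mono_tags, lifting) mem_Collect_eq not_less)
  qed
qed

lemma two_le_second_smallest:
  fixes xs :: "'a :: linorder list"
  assumes "length xs \<ge> 2"
  shows "\<exists>i0 i1. i0 < length xs \<and> i1 < length xs \<and> i0 \<noteq> i1 \<and>
    xs ! i0 \<le> sort xs ! 1 \<and> xs ! i1 \<le> sort xs ! 1"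
proof -
  have "{0, 1} \<subseteq> {i. i < length xs \<and> sort xs ! i \<le> sort xs ! 1}"
    using assms sorted_nth_mono[OF sorted_sort[of xs], of 0 1] by auto
  hence "card {0 :: nat, 1} \<le> card {i. i < length xs \<and> sort xs ! i \<le> sort xs ! 1}"
    by (intro card_mono) auto
  hence "Suc (Suc 0) \<le> card {i. i < length xs \<and> xs ! i \<le> sort xs ! 1}"
    using card_nth_sort[of xs "\<lambda>a. a \<le> sort xs ! 1"] by simp
  hence "\<not> (\<forall>a \<in> {i. i < length xs \<and> xs ! i \<le> sort xs ! 1}.
      \<forall>b \<in> {i. i < length xs \<and> xs ! i \<le> sort xs ! 1}. a = b)"
    by (subst card_le_Suc0_iff_eq[symmetric]) auto
  thus ?thesis by blast
qed

lemma sum_two_points: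
  assumes "finite A" "i0 \<in> A" "i1 \<in> A" "i0 \<noteq> i1"
  shows "(\<Sum>i\<in>A. if i = i0 then a else if i = i1 then b else 0) = a + (b :: 'a :: comm_monoid_add)"
proof -
  have "(\<Sum>i\<in>A. if i = i0 then a else if i = i1 then b else 0)
      = (\<Sum>i\<in>A. (if i = i0 then a else 0) + (if i = i1 then b else 0))"
    using assms(4) by (intro sum.cong) auto
  also have "\<dots> = a + b" using assms(1-3) by (simp only: sum.distrib sum.delta if_True)
  finally show ?thesis .
qed

lemma orthogonal_diagonalization_rayleigh_le:
  assumes A: "A \<in> carrier_mat n n" and U: "orthogonal_diagonalization n A U ds"
    and c: "c \<in> carrier_vec n" and ev: "\<And>i. i < n \<Longrightarrow> c $ i \<noteq> 0 \<Longrightarrow> ds ! i \<le> t"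
  shows "(U *\<^sub>v c) \<bullet> (A *\<^sub>v (U *\<^sub>v c)) \<le> t * ((U *\<^sub>v c) \<bullet> (U *\<^sub>v c))"
proof -
  have "(\<Sum>i<n. ds ! i * (c $ i)\<^sup>2) \<le> (\<Sum>i<n. t * (c $ i)\<^sup>2)"
  proof (intro sum_mono)
    fix i assume "i \<in> {..<n}"
    thus "ds ! i * (c $ i)\<^sup>2 \<le> t * (c $ i)\<^sup>2"
      using ev[of i] by (cases "c $ i = 0") (auto intro: mult_right_mono)
  qed
  also have "\<dots> = t * (c \<bullet> c)"
    using c by (simp add: scalar_prod_def sum_distrib_left power2_eq_square atLeast0LessThan)
  finally show ?thesis using orthogonal_diagonalization_quadratic_form[OF A U c] by simp
qed

lemma orthogonal_diagonalization_rayleigh_ge: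
  assumes A: "A \<in> carrier_mat n n" and U: "orthogonal_diagonalization n A U ds"
    and c: "c \<in> carrier_vec n" and ev: "\<And>i. i < n \<Longrightarrow> c $ i \<noteq> 0 \<Longrightarrow> t \<le> ds ! i"
  shows "t * ((U *\<^sub>v c) \<bullet> (U *\<^sub>v c)) \<le> (U *\<^sub>v c) \<bullet> (A *\<^sub>v (U *\<^sub>v c))"
proof -
  have "t * (c \<bullet> c) = (\<Sum>i<n. t * (c $ i)\<^sup>2)"
    using c by (simp add: scalar_prod_def sum_distrib_left power2_eq_square atLeast0LessThan)
  also have "\<dots> \<le> (\<Sum>i<n. ds ! i * (c $ i)\<^sup>2)"
  proof (intro sum_mono)
    fix i assume "i \<in> {..<n}"
    thus "t * (c $ i)\<^sup>2 \<le> ds ! i * (c $ i)\<^sup>2"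
      using ev[of i] by (cases "c $ i = 0") (auto intro: mult_right_mono)
  qed
  finally show ?thesis using orthogonal_diagonalization_quadratic_form[OF A U c] by simp
qed

lemma rayleigh_bound_le_second_eigenvalue:
  assumes A: "A \<in> carrier_mat n n" and U: "orthogonal_diagonalization n A U ds" and n: "n \<ge> 2"
    and v: "v \<in> carrier_vec n"
    and bound: "\<And>x. x \<in> carrier_vec n \<Longrightarrow> x \<noteq> 0\<^sub>v n \<Longrightarrow> x \<bullet> v = 0 \<Longrightarrow> s * (x \<bullet> x) \<le> x \<bullet> (A *\<^sub>v x)"
  shows "s \<le> sort ds ! 1"
proof -
  let ?t = "sort ds ! 1"
  have U_carrier: "U \<in> carrier_mat n n" and len: "length ds = n"
    using U unfolding orthogonal_diagonalization_def by auto
  obtain i0 i1 where i: "i0 < n" "i1 < n" "i0 \<noteq> i1" "ds ! i0 \<le> ?t" "ds ! i1 \<le> ?t"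
    using two_le_second_smallest[of ds] len n by auto
  define w where "w = transpose_mat U *\<^sub>v v"
  define \<alpha> where "\<alpha> = (if w $ i1 = 0 \<and> w $ i0 = 0 then 1 else w $ i1)"
  define \<beta> where "\<beta> = (if w $ i1 = 0 \<and> w $ i0 = 0 then 0 else - w $ i0)"
  have \<alpha>\<beta>: "\<alpha> * w $ i0 + \<beta> * w $ i1 = 0" "\<alpha> \<noteq> 0 \<or> \<beta> \<noteq> 0" unfolding \<alpha>_def \<beta>_def by auto
  \<comment> \<open>a nonzero vector orthogonal to v in the span of two eigenvectors with eigenvalue \<le> ?t\<close>
  define c where "c = vec n (\<lambda>i. if i = i0 then \<alpha> else if i = i1 then \<beta> else 0)"
  have c: "c \<in> carrier_vec n" unfolding c_def by simp
  have "c \<noteq> 0\<^sub>v n"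
  proof
    assume "c = 0\<^sub>v n"
    hence "c $ i0 = 0" "c $ i1 = 0" using i by auto
    thus False using \<alpha>\<beta>(2) i unfolding c_def by auto
  qed
  hence "c \<bullet> c > 0" by (rule real_scalar_prod_self_pos[OF c])
  hence yy: "(U *\<^sub>v c) \<bullet> (U *\<^sub>v c) > 0" using orthogonal_diagonalization_quadratic_form(2)[OF A U c] by simp
  have "(U *\<^sub>v c) \<bullet> v = c \<bullet> w"
    unfolding w_def using transpose_vec_mult_scalar[of "transpose_mat U" n n v c] U_carrier v c by simp
  also have "\<dots> = (\<Sum>i<n. if i = i0 then \<alpha> * w $ i0 else if i = i1 then \<beta> * w $ i1 else 0)"
    using U_carrier unfolding c_def w_def by (auto simp: scalar_prod_def atLeast0LessThan intro!: sum.cong)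
  also have "\<dots> = 0" using i(1-3) \<alpha>\<beta>(1) by (subst sum_two_points) auto
  finally have "s * ((U *\<^sub>v c) \<bullet> (U *\<^sub>v c)) \<le> (U *\<^sub>v c) \<bullet> (A *\<^sub>v (U *\<^sub>v c))"
    using bound[of "U *\<^sub>v c"] U_carrier c yy by fastforce
  also have "\<dots> \<le> ?t * ((U *\<^sub>v c) \<bullet> (U *\<^sub>v c))"
    using i by (intro orthogonal_diagonalization_rayleigh_le[OF A U c]) (auto simp: c_def split: if_splits)
  finally show ?thesis using yy by simp
qed

lemma le_of_weighted_le:
  fixes t a b V X Q :: real
  assumes main: "t * (a\<^sup>2 * V + b\<^sup>2 * X) \<le> b\<^sup>2 * Q" and "V > 0" "X \<ge> 0" "Q \<ge> 0" "a \<noteq> 0 \<or> b \<noteq> 0"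
  shows "t * X \<le> Q"
proof (cases "t \<le> 0")
  case True
  thus ?thesis using assms(3,4) by (meson mult_nonpos_nonneg order_trans)
next
  case False
  have "b \<noteq> 0"
  proof
    assume "b = 0"
    hence "t * (a\<^sup>2 * V) > 0" using assms(2,5) False by simp
    thus False using main \<open>b = 0\<close> by simp
  qed
  have "b\<^sup>2 * (t * X) \<le> t * (a\<^sup>2 * V + b\<^sup>2 * X)" using False assms(2) by (simp add: algebra_simps)
  also note main
  finally show ?thesis using \<open>b \<noteq> 0\<close> by (simp add: mult_le_cancel_left_pos)
qed

lemma exists_combination_orthogonal:
  fixes v x w :: "real vec"
  assumes "v \<in> carrier_vec n" "x \<in> carrier_vec n" "w \<in> carrier_vec n"
  shows "\<exists>\<alpha> \<beta>. (\<alpha> \<noteq> 0 \<or> \<beta> \<noteq> 0) \<and> w \<bullet> (\<alpha> \<cdot>\<^sub>v v + \<beta> \<cdot>\<^sub>v x) = 0"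
proof (cases "w \<bullet> v = 0")
  case True
  thus ?thesis using assms by (intro exI[of _ 1] exI[of _ 0]) (simp add: scalar_prod_add_distrib[of _ n])
next
  case False
  thus ?thesis using assms
    by (intro exI[of _ "w \<bullet> x"] exI[of _ "- (w \<bullet> v)"]) (simp add: scalar_prod_add_distrib[of _ n])
qed

lemma scalar_prod_orthogonal_combination:
  fixes v x :: "real vec"
  assumes v: "v \<in> carrier_vec n" and x: "x \<in> carrier_vec n" "x \<bullet> v = 0"
  shows "(\<alpha> \<cdot>\<^sub>v v + \<beta> \<cdot>\<^sub>v x) \<bullet> (\<alpha> \<cdot>\<^sub>v v + \<beta> \<cdot>\<^sub>v x) = \<alpha>\<^sup>2 * (v \<bullet> v) + \<beta>\<^sup>2 * (x \<bullet> x)"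
proof -
  have "v \<bullet> x = 0" using x comm_scalar_prod[OF x(1) v] by simp
  thus ?thesis using v x
    by (simp add: add_scalar_prod_distrib[of _ n] scalar_prod_add_distrib[of _ n] power2_eq_square)
qed

lemma quadratic_form_add_kernel:
  fixes A :: "real mat"
  assumes A: "A \<in> carrier_mat n n" and sym: "transpose_mat A = A"
    and v: "v \<in> carrier_vec n" "A *\<^sub>v v = 0\<^sub>v n" and x: "x \<in> carrier_vec n"
  shows "(\<alpha> \<cdot>\<^sub>v v + \<beta> \<cdot>\<^sub>v x) \<bullet> (A *\<^sub>v (\<alpha> \<cdot>\<^sub>v v + \<beta> \<cdot>\<^sub>v x)) = \<beta>\<^sup>2 * (x \<bullet> (A *\<^sub>v x))"
proof -
  have "\<alpha> \<cdot>\<^sub>v 0\<^sub>v n = 0\<^sub>v n" by (rule eq_vecI) auto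
  hence "A *\<^sub>v (\<alpha> \<cdot>\<^sub>v v + \<beta> \<cdot>\<^sub>v x) = \<beta> \<cdot>\<^sub>v (A *\<^sub>v x)"
    using A v x by (simp add: mult_add_distrib_mat_vec[of _ n n] mult_mat_vec[of _ n n])
  moreover have "v \<bullet> (A *\<^sub>v x) = 0"
    using transpose_vec_mult_scalar[OF A x v(1)] sym v x by simp
  ultimately show ?thesis using A v x by (simp add: add_scalar_prod_distrib[of _ n] power2_eq_square)
qed

lemma second_eigenvalue_le_rayleigh:
  assumes A: "A \<in> carrier_mat n n" and sym: "transpose_mat A = A"
    and U: "orthogonal_diagonalization n A U ds"
    and psd: "\<And>x. x \<in> carrier_vec n \<Longrightarrow> 0 \<le> x \<bullet> (A *\<^sub>v x)"
    and v: "v \<in> carrier_vec n" "v \<noteq> 0\<^sub>v n" "A *\<^sub>v v = 0\<^sub>v n"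
    and x: "x \<in> carrier_vec n" "x \<bullet> v = 0"
  shows "sort ds ! 1 * (x \<bullet> x) \<le> x \<bullet> (A *\<^sub>v x)"
proof -
  let ?t = "sort ds ! 1"
  have U_carrier: "U \<in> carrier_mat n n" and len: "length ds = n"
    using U unfolding orthogonal_diagonalization_def by auto
  obtain i0 where i0: "\<forall>i<n. i \<noteq> i0 \<longrightarrow> ?t \<le> ds ! i"
    using all_but_one_ge_second_smallest[of ds] len by auto
  \<comment> \<open>a nonzero vector in the span of v and x, orthogonal to the only eigenvector that may lie below ?t\<close>
  obtain \<alpha> \<beta> where \<alpha>\<beta>: "\<alpha> \<noteq> 0 \<or> \<beta> \<noteq> 0"
    and orth: "vec n (\<lambda>j. U $$ (j, i0)) \<bullet> (\<alpha> \<cdot>\<^sub>v v + \<beta> \<cdot>\<^sub>v x) = 0"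
    using exists_combination_orthogonal[OF v(1) x(1), of "vec n (\<lambda>j. U $$ (j, i0))"] by auto
  define y where "y = \<alpha> \<cdot>\<^sub>v v + \<beta> \<cdot>\<^sub>v x"
  define c where "c = transpose_mat U *\<^sub>v y"
  have c: "c \<in> carrier_vec n" unfolding c_def y_def using U_carrier v x by simp
  have y_eq: "y = U *\<^sub>v c" unfolding c_def y_def
    using U_carrier v x orthogonal_diagonalization_right_inverse[OF U]
    by (simp add: assoc_mult_mat_vec[symmetric, of _ n n _ n])
  have "c $ i0 = 0" if "i0 < n"
    using orth that U_carrier unfolding c_def y_def by (simp add: col_def)
  hence "?t * (y \<bullet> y) \<le> y \<bullet> (A *\<^sub>v y)" unfolding y_eq
    using i0 by (intro orthogonal_diagonalization_rayleigh_ge[OF A U c]) auto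
  hence "?t * (\<alpha>\<^sup>2 * (v \<bullet> v) + \<beta>\<^sup>2 * (x \<bullet> x)) \<le> \<beta>\<^sup>2 * (x \<bullet> (A *\<^sub>v x))"
    unfolding y_def scalar_prod_orthogonal_combination[OF v(1) x]
      quadratic_form_add_kernel[OF A sym v(1,3) x(1)] .
  moreover have "v \<bullet> v > 0" by (rule real_scalar_prod_self_pos[OF v(1,2)])
  moreover have "x \<bullet> x \<ge> 0" using conjugate_square_ge_0_vec[of x] by (simp add: scalar_prod_def)
  ultimately show ?thesis using le_of_weighted_le psd[OF x(1)] \<alpha>\<beta> by simp
qed

section \<open>The Laplacian quadratic form\<close>

definition laplacian_form :: "nat \<Rightarrow> (nat \<Rightarrow> nat \<Rightarrow> bool) \<Rightarrow> (nat \<Rightarrow> real) \<Rightarrow> real" where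
  "laplacian_form n E f = (\<Sum>i<n. \<Sum>j<n. if E i j then (f i - f j)\<^sup>2 else 0) / 2"

definition rayleigh_lower_bound :: "nat \<Rightarrow> (nat \<Rightarrow> nat \<Rightarrow> bool) \<Rightarrow> real \<Rightarrow> bool" where
  "rayleigh_lower_bound n E a \<longleftrightarrow>
     (\<forall>f. (\<Sum>i<n. f i) = 0 \<longrightarrow> a * (\<Sum>i<n. (f i)\<^sup>2) \<le> laplacian_form n E f)"

lemma simple_graph_sym: "simple_graph n E \<Longrightarrow> i < n \<Longrightarrow> j < n \<Longrightarrow> E i j \<longleftrightarrow> E j i"
  unfolding simple_graph_def by blast

lemma simple_graph_irrefl: "simple_graph n E \<Longrightarrow> i < n \<Longrightarrow> \<not> E i i"
  unfolding simple_graph_def by blast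

lemma laplacian_carrier: "laplacian n E \<in> carrier_mat n n"
  unfolding laplacian_def by simp

lemma laplacian_symmetric:
  assumes "simple_graph n E"
  shows "transpose_mat (laplacian n E) = laplacian n E"
  unfolding laplacian_def by (intro eq_matI) (auto simp: simple_graph_sym[OF assms])

lemma laplacian_mult_vec:
  assumes sg: "simple_graph n E" and i: "i < n"
  shows "(laplacian n E *\<^sub>v vec n f) $ i = (\<Sum>j<n. if E i j then f i - f j else 0)"
proof -
  have deg: "real (card {k. k < n \<and> E i k}) = (\<Sum>j<n. if E i j then 1 else 0)"
  proof -
    have "{k. k < n \<and> E i k} = {..<n} \<inter> {j. E i j}" by auto
    moreover have "(\<Sum>j\<in>{..<n} \<inter> {j. E i j}. (1::real)) = (\<Sum>j<n. if E i j then 1 else 0)"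
      by (subst sum.inter_restrict) auto
    ultimately show ?thesis by simp
  qed
  have "(laplacian n E *\<^sub>v vec n f) $ i = (\<Sum>j<n. (if i = j then real (card {k. k < n \<and> E i k})
      else if E i j then -1 else 0) * f j)"
    using i by (simp add: laplacian_def scalar_prod_def atLeast0LessThan)
  also have "\<dots> = (\<Sum>j<n. (if i = j then real (card {k. k < n \<and> E i k}) * f i else 0)
      + (if E i j then - f j else 0))"
    using simple_graph_irrefl[OF sg i] by (intro sum.cong) auto
  also have "\<dots> = real (card {k. k < n \<and> E i k}) * f i + (\<Sum>j<n. if E i j then - f j else 0)"
    using i by (simp add: sum.distrib)
  also have "\<dots> = (\<Sum>j<n. (if E i j then 1 else 0) * f i + (if E i j then - f j else 0))"
    unfolding deg by (simp add: sum.distrib sum_distrib_right)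
  also have "\<dots> = (\<Sum>j<n. if E i j then f i - f j else 0)"
    by (intro sum.cong) auto
  finally show ?thesis .
qed

lemma laplacian_quadratic_form:
  assumes sg: "simple_graph n E"
  shows "vec n f \<bullet> (laplacian n E *\<^sub>v vec n f) = laplacian_form n E f"
proof -
  define S where "S = (\<Sum>i<n. \<Sum>j<n. if E i j then f i * (f i - f j) else 0)"
  have "vec n f \<bullet> (laplacian n E *\<^sub>v vec n f) = (\<Sum>i<n. f i * (\<Sum>j<n. if E i j then f i - f j else 0))"
    using laplacian_mult_vec[OF sg] laplacian_carrier[of n E] by (simp add: scalar_prod_def atLeast0LessThan)
  also have "\<dots> = S" unfolding S_def sum_distrib_left by (intro sum.cong refl) auto
  finally have quad: "vec n f \<bullet> (laplacian n E *\<^sub>v vec n f) = S" .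
  have "S = (\<Sum>j<n. \<Sum>i<n. if E i j then f i * (f i - f j) else 0)" unfolding S_def by (rule sum.swap)
  also have "\<dots> = (\<Sum>i<n. \<Sum>j<n. if E i j then f j * (f j - f i) else 0)"
    by (intro sum.cong refl) (auto simp: simple_graph_sym[OF sg])
  finally have "2 * S = (\<Sum>i<n. \<Sum>j<n. (if E i j then f i * (f i - f j) else 0)
      + (if E i j then f j * (f j - f i) else 0))"
    unfolding S_def by (simp add: sum.distrib)
  also have "\<dots> = (\<Sum>i<n. \<Sum>j<n. if E i j then (f i - f j)\<^sup>2 else 0)"
    by (intro sum.cong refl) (auto simp: power2_eq_square algebra_simps)
  also have "\<dots> = 2 * laplacian_form n E f" unfolding laplacian_form_def by simp
  finally show ?thesis using quad by simp
qed

lemma laplacian_mult_ones: "simple_graph n E \<Longrightarrow> laplacian n E *\<^sub>v vec n (\<lambda>_. 1) = 0\<^sub>v n"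
  using laplacian_mult_vec[of n E _ "\<lambda>_. 1"] laplacian_carrier[of n E] by (intro eq_vecI) auto

lemma laplacian_form_nonneg: "laplacian_form n E f \<ge> 0"
  unfolding laplacian_form_def by (intro divide_nonneg_pos sum_nonneg) auto

lemma laplacian_orthogonal_diagonalization:
  assumes sg: "simple_graph n E"
  obtains U ds where "orthogonal_diagonalization n (laplacian n E) U ds"
    "algebraic_connectivity n E = sort ds ! 1"
proof -
  obtain U ds where U: "orthogonal_diagonalization n (laplacian n E) U ds"
    using symmetric_real_mat_orthogonal_diagonalization[OF laplacian_carrier laplacian_symmetric[OF sg]]
    by blast
  have "laplacian_eigenvalues n E = sort ds"
    unfolding laplacian_eigenvalues_def
    by (rule sorted_linear_factorization_unique[OF orthogonal_diagonalization_char_poly[OF laplacian_carrier U]])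
  thus thesis using that[OF U] unfolding algebraic_connectivity_def by simp
qed

lemma vec_index_carrier: "x \<in> carrier_vec n \<Longrightarrow> vec n (\<lambda>i. x $ i) = x"
  by (intro eq_vecI) auto

lemma algebraic_connectivity_rayleigh_lower_bound:
  assumes sg: "simple_graph n E"
  shows "rayleigh_lower_bound n E (algebraic_connectivity n E)"
  unfolding rayleigh_lower_bound_def
proof (intro allI impI)
  fix f :: "nat \<Rightarrow> real" assume f: "(\<Sum>i<n. f i) = 0"
  obtain U ds where U: "orthogonal_diagonalization n (laplacian n E) U ds"
    and a: "algebraic_connectivity n E = sort ds ! 1"
    using laplacian_orthogonal_diagonalization[OF sg] .
  show "algebraic_connectivity n E * (\<Sum>i<n. (f i)\<^sup>2) \<le> laplacian_form n E f"
  proof (cases "n = 0")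
    case True thus ?thesis using laplacian_form_nonneg by simp
  next
    case False
    have "vec n (\<lambda>_. 1 :: real) $ 0 \<noteq> 0\<^sub>v n $ 0" using False by simp
    hence "vec n (\<lambda>_. 1 :: real) \<noteq> 0\<^sub>v n" by metis
    moreover have "x \<bullet> (laplacian n E *\<^sub>v x) \<ge> 0" if "x \<in> carrier_vec n" for x
      using laplacian_quadratic_form[OF sg, of "\<lambda>i. x $ i"] laplacian_form_nonneg
      by (simp add: vec_index_carrier[OF that])
    moreover have "vec n f \<bullet> vec n (\<lambda>_. 1) = 0" using f by (simp add: scalar_prod_def atLeast0LessThan)
    ultimately have "sort ds ! 1 * (vec n f \<bullet> vec n f) \<le> vec n f \<bullet> (laplacian n E *\<^sub>v vec n f)"
      by (intro second_eigenvalue_le_rayleigh[OF laplacian_carrier laplacian_symmetric[OF sg] U _ _ _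
            laplacian_mult_ones[OF sg]]) auto
    thus ?thesis unfolding a laplacian_quadratic_form[OF sg]
      by (simp add: scalar_prod_def atLeast0LessThan power2_eq_square)
  qed
qed

lemma rayleigh_lower_bound_le_algebraic_connectivity:
  assumes sg: "simple_graph n E" and n: "n \<ge> 2" and s: "rayleigh_lower_bound n E s"
  shows "s \<le> algebraic_connectivity n E"
proof -
  obtain U ds where U: "orthogonal_diagonalization n (laplacian n E) U ds"
    and a: "algebraic_connectivity n E = sort ds ! 1"
    using laplacian_orthogonal_diagonalization[OF sg] .
  have "s \<le> sort ds ! 1"
  proof (rule rayleigh_bound_le_second_eigenvalue[OF laplacian_carrier U n, of "vec n (\<lambda>_. 1)"])
    fix x :: "real vec" assume x: "x \<in> carrier_vec n" "x \<bullet> vec n (\<lambda>_. 1) = 0"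
    have "(\<Sum>i<n. x $ i) = 0" using x by (simp add: scalar_prod_def atLeast0LessThan)
    hence "s * (\<Sum>i<n. (x $ i)\<^sup>2) \<le> laplacian_form n E (\<lambda>i. x $ i)"
      using s unfolding rayleigh_lower_bound_def by blast
    thus "s * (x \<bullet> x) \<le> x \<bullet> (laplacian n E *\<^sub>v x)"
      using x laplacian_quadratic_form[OF sg, of "\<lambda>i. x $ i"]
      by (simp add: vec_index_carrier[OF x(1)] scalar_prod_def atLeast0LessThan power2_eq_square)
  qed simp
  thus ?thesis unfolding a .
qed

section \<open>Separators and universal vertices\<close>

lemma sum_lessThan_indicator:
  fixes n :: nat
  assumes "R \<subseteq> {..<n}"
  shows "(\<Sum>j<n. if j \<in> R then g j else 0) = sum g R"
  using sum.inter_restrict[of "{..<n}" g R] assms by (simp add: Int_absorb1)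

lemma laplacian_form_le_if_vanishing:
  fixes f :: "nat \<Rightarrow> real"
  assumes S: "S \<subseteq> {..<n}" and zero: "\<And>i. i \<in> S \<Longrightarrow> f i = 0"
    and const: "\<And>i j. i < n \<Longrightarrow> j < n \<Longrightarrow> i \<notin> S \<Longrightarrow> j \<notin> S \<Longrightarrow> E i j \<Longrightarrow> f i = f j"
  shows "laplacian_form n E f \<le> card S * (\<Sum>i<n. (f i)\<^sup>2)"
    and "i0 \<in> S \<Longrightarrow> j0 < n \<Longrightarrow> j0 \<notin> S \<Longrightarrow> \<not> E i0 j0 \<Longrightarrow> f j0 \<noteq> 0 \<Longrightarrow>
      laplacian_form n E f < card S * (\<Sum>i<n. (f i)\<^sup>2)"
proof -
  define F where "F = (\<Sum>i<n. (f i)\<^sup>2)"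
  define g where "g i j = (if i \<in> S then (f j)\<^sup>2 else 0) + (if j \<in> S then (f i)\<^sup>2 else 0)" for i j
  define t where "t i j = (if E i j then (f i - f j)\<^sup>2 else 0)" for i j
  have t_le: "t i j \<le> g i j" if "i < n" "j < n" for i j
    using zero const[OF that] by (cases "i \<in> S"; cases "j \<in> S") (auto simp: t_def g_def)
  have "(\<Sum>i<n. \<Sum>j<n. g i j) = (\<Sum>i<n. (if i \<in> S then F else 0) + (f i)\<^sup>2 * real (card S))"
    unfolding g_def F_def by (intro sum.cong refl) (simp add: sum.distrib sum_lessThan_indicator[OF S])
  also have "\<dots> = 2 * real (card S) * F"
    unfolding F_def by (simp add: sum.distrib sum_lessThan_indicator[OF S] sum_distrib_right[symmetric])
  finally have g_sum: "(\<Sum>i<n. \<Sum>j<n. g i j) = 2 * real (card S) * F" .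
  have "(\<Sum>i<n. \<Sum>j<n. t i j) \<le> (\<Sum>i<n. \<Sum>j<n. g i j)"
    using t_le by (intro sum_mono) auto
  thus "laplacian_form n E f \<le> card S * (\<Sum>i<n. (f i)\<^sup>2)"
    unfolding laplacian_form_def g_sum F_def t_def by simp
  assume i0: "i0 \<in> S" and j0: "j0 < n" "j0 \<notin> S" "\<not> E i0 j0" "f j0 \<noteq> 0"
  have "i0 < n" using i0 S by auto
  have "t i0 j0 < g i0 j0" using i0 j0 by (simp add: t_def g_def)
  hence "(\<Sum>j<n. t i0 j) < (\<Sum>j<n. g i0 j)"
    using t_le \<open>i0 < n\<close> j0(1) by (intro sum_strict_mono_ex1) auto
  hence "(\<Sum>i<n. \<Sum>j<n. t i j) < (\<Sum>i<n. \<Sum>j<n. g i j)"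
    using t_le \<open>i0 < n\<close> by (intro sum_strict_mono_ex1) (auto intro!: sum_mono)
  thus "laplacian_form n E f < card S * (\<Sum>i<n. (f i)\<^sup>2)"
    unfolding laplacian_form_def g_sum F_def t_def by simp
qed

lemma reach_in_refl: "u \<in> U \<Longrightarrow> reach_in E U u u"
  unfolding reach_in_def by simp

lemma reach_in_step: "reach_in E U u w \<Longrightarrow> w' \<in> U \<Longrightarrow> E w w' \<Longrightarrow> reach_in E U u w'"
  unfolding reach_in_def by (auto intro: rtrancl_into_rtrancl)

lemma separator_partition:
  assumes sep: "separator n E S"
  obtains C D where "C \<noteq> {}" "D \<noteq> {}" "C \<inter> D = {}" "C \<union> D = {..<n} - S"
    "\<And>i j. i \<in> C \<Longrightarrow> j \<in> D \<Longrightarrow> \<not> E i j"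
proof -
  obtain u v where uv: "u \<in> {..<n} - S" "v \<in> {..<n} - S" "\<not> reach_in E ({..<n} - S) u v"
    using sep unfolding separator_def by auto
  define C where "C = {w. reach_in E ({..<n} - S) u w}"
  have "C \<subseteq> {..<n} - S" unfolding C_def reach_in_def by auto
  moreover have "u \<in> C" "v \<notin> C" using uv reach_in_refl[of u "{..<n} - S" E] unfolding C_def by auto
  moreover have "\<not> E i j" if "i \<in> C" "j \<in> ({..<n} - S) - C" for i j
    using that reach_in_step[of E "{..<n} - S" u i j] unfolding C_def by auto
  ultimately show thesis using uv(2) by (intro that[of C "({..<n} - S) - C"]) auto
qed

lemma rayleigh_lower_bound_le_card_separator:
  assumes sg: "simple_graph n E" and sep: "separator n E S" and a: "rayleigh_lower_bound n E a"
  shows "a \<le> card S"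
    and "i0 \<in> S \<Longrightarrow> j0 < n \<Longrightarrow> j0 \<notin> S \<Longrightarrow> \<not> E i0 j0 \<Longrightarrow> a < card S"
proof -
  have S: "S \<subseteq> {..<n}" using sep unfolding separator_def by auto
  obtain C D where CD: "C \<noteq> {}" "D \<noteq> {}" "C \<inter> D = {}" "C \<union> D = {..<n} - S"
    and no_edge: "\<And>i j. i \<in> C \<Longrightarrow> j \<in> D \<Longrightarrow> \<not> E i j"
    using separator_partition[OF sep] by blast
  have C_n: "C \<subseteq> {..<n}" and D_n: "D \<subseteq> {..<n}" using CD(4) by auto
  have card_pos: "card C > 0" "card D > 0"
    using CD(1,2) finite_subset[OF C_n] finite_subset[OF D_n] by (auto simp: card_gt_0_iff)
  define f where "f w = (if w \<in> C then real (card D) else if w \<in> D then - real (card C) else 0)" for w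
  have "(\<Sum>i<n. f i) = (\<Sum>i<n. (if i \<in> C then real (card D) else 0) + (if i \<in> D then - real (card C) else 0))"
    unfolding f_def using CD(3) by (intro sum.cong) auto
  hence f_sum: "(\<Sum>i<n. f i) = 0" by (simp add: sum.distrib sum_lessThan_indicator[OF C_n]
        sum_lessThan_indicator[OF D_n])
  have f_zero: "f i = 0" if "i \<in> S" for i using that CD(4) unfolding f_def by auto
  have f_nonzero: "f i \<noteq> 0" if "i < n" "i \<notin> S" for i using that CD(4) card_pos unfolding f_def by auto
  have f_const: "f i = f j" if ij: "i < n" "j < n" "i \<notin> S" "j \<notin> S" "E i j" for i j
    using ij CD(3,4) no_edge[of i j] no_edge[of j i] simple_graph_sym[OF sg ij(1,2)]
    unfolding f_def by auto
  obtain u where "u < n" "u \<notin> S" using CD(1,4) by auto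
  hence F_pos: "(\<Sum>i<n. (f i)\<^sup>2) > 0" using f_nonzero by (intro sum_pos2[of _ u]) auto
  have "a * (\<Sum>i<n. (f i)\<^sup>2) \<le> laplacian_form n E f"
    using a f_sum unfolding rayleigh_lower_bound_def by blast
  note bound = order_trans[OF this] order_le_less_trans[OF this]
  show "a \<le> card S"
    using bound(1)[OF laplacian_form_le_if_vanishing(1)[OF S f_zero f_const]] F_pos by simp
  assume "i0 \<in> S" "j0 < n" "j0 \<notin> S" "\<not> E i0 j0"
  thus "a < card S"
    using bound(2)[OF laplacian_form_le_if_vanishing(2)[OF S f_zero f_const]] F_pos f_nonzero by simp
qed

lemma sum_sum_square_diff:
  fixes f :: "'a \<Rightarrow> real"
  assumes "finite R"
  shows "(\<Sum>i\<in>R. \<Sum>j\<in>R. (f i - f j)\<^sup>2) = 2 * card R * (\<Sum>i\<in>R. (f i)\<^sup>2) - 2 * (\<Sum>i\<in>R. f i)\<^sup>2"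
proof -
  have "(\<Sum>i\<in>R. \<Sum>j\<in>R. (f i - f j)\<^sup>2) = (\<Sum>i\<in>R. \<Sum>j\<in>R. (f i)\<^sup>2 + (f j)\<^sup>2 - 2 * (f i * f j))"
    by (intro sum.cong refl) (simp add: power2_eq_square algebra_simps)
  also have "\<dots> = (\<Sum>i\<in>R. \<Sum>j\<in>R. (f i)\<^sup>2) + (\<Sum>i\<in>R. \<Sum>j\<in>R. (f j)\<^sup>2)
      - 2 * (\<Sum>i\<in>R. \<Sum>j\<in>R. f i * f j)"
    by (simp only: sum.distrib sum_subtractf sum_distrib_left)
  also have "(\<Sum>i\<in>R. \<Sum>j\<in>R. f i * f j) = (\<Sum>i\<in>R. f i)\<^sup>2"
    by (simp add: power2_eq_square sum_product)
  finally show ?thesis by (simp add: sum_distrib_left[symmetric] mult.commute)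
qed

lemma universal_set_rayleigh_lower_bound:
  assumes sg: "simple_graph n E" and S: "S \<subseteq> {..<n}" and univ: "\<forall>v\<in>S. universal_vertex n E v"
  shows "rayleigh_lower_bound n E (card S)"
  unfolding rayleigh_lower_bound_def
proof (intro allI impI)
  fix f :: "nat \<Rightarrow> real" assume f: "(\<Sum>i<n. f i) = 0"
  define R where "R = {..<n} - S"
  define T where "T i j = (f i - f j)\<^sup>2" for i j
  define F where "F = (\<Sum>i<n. (f i)\<^sup>2)"
  have R: "R \<subseteq> {..<n}" "finite R" unfolding R_def by auto
  have card_R: "real (card R) = real n - real (card S)"
    using S card_mono[OF _ S] unfolding R_def by (simp add: card_Diff_subset finite_subset of_nat_diff)
  have all: "(\<Sum>i<n. \<Sum>j<n. T i j) = 2 * real n * F"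
    using sum_sum_square_diff[of "{..<n}" f] f unfolding T_def F_def by simp
  have "(\<Sum>i\<in>R. \<Sum>j\<in>R. T i j) \<le> 2 * real (card R) * (\<Sum>i\<in>R. (f i)\<^sup>2)"
    using sum_sum_square_diff[OF R(2), of f] unfolding T_def by simp
  also have "\<dots> \<le> 2 * real (card R) * F"
    unfolding F_def using R(1) by (intro mult_left_mono sum_mono2) auto
  finally have inside: "(\<Sum>i\<in>R. \<Sum>j\<in>R. T i j) \<le> 2 * real (card R) * F" .
  \<comment> \<open>every pair meeting S is an edge, unless it is a loop, which contributes nothing\<close>
  have meets_S: "(if i \<in> S \<or> j \<in> S then T i j else 0) \<le> (if E i j then (f i - f j)\<^sup>2 else 0)"
    if "i < n" "j < n" for i j
    using univ simple_graph_sym[OF sg that] that unfolding universal_vertex_def T_def by auto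
  have "(\<Sum>i<n. \<Sum>j<n. T i j)
      = (\<Sum>i<n. \<Sum>j<n. if i \<in> S \<or> j \<in> S then T i j else 0) + (\<Sum>i<n. \<Sum>j<n. if i \<in> R \<and> j \<in> R then T i j else 0)"
    unfolding sum.distrib[symmetric] by (intro sum.cong refl) (auto simp: R_def)
  also have "(\<Sum>i<n. \<Sum>j<n. if i \<in> R \<and> j \<in> R then T i j else 0)
      = (\<Sum>i<n. if i \<in> R then (\<Sum>j\<in>R. T i j) else 0)"
    by (intro sum.cong refl) (auto simp: sum_lessThan_indicator[OF R(1)])
  also have "\<dots> = (\<Sum>i\<in>R. \<Sum>j\<in>R. T i j)" by (rule sum_lessThan_indicator[OF R(1)])
  also have "(\<Sum>i<n. \<Sum>j<n. if i \<in> S \<or> j \<in> S then T i j else 0) \<le> 2 * laplacian_form n E f"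
    unfolding laplacian_form_def using meets_S by (auto intro!: sum_mono)
  finally show "real (card S) * (\<Sum>i<n. (f i)\<^sup>2) \<le> laplacian_form n E f"
    using all inside card_R unfolding F_def by (simp add: algebra_simps)
qed

section \<open>Minimum separators of chordal graphs\<close>

lemma vertex_connectivity_le_card:
  assumes "separator n E S"
  shows "vertex_connectivity n E \<le> card S"
proof -
  have "{card S | S. separator n E S} \<subseteq> card ` Pow {..<n}"
    unfolding separator_def by auto
  hence "finite {card S | S. separator n E S}" by (rule finite_subset) simp
  thus ?thesis unfolding vertex_connectivity_def using assms by (intro Min_le) auto
qed

lemma minimum_separator_exists:
  assumes sg: "simple_graph n E" and conn: "connected_graph n E" and "\<not> complete_graph n E"
  shows "\<exists>S. separator n E S \<and> card S = vertex_connectivity n E"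
proof -
  obtain u v where uv: "u < n" "v < n" "u \<noteq> v" "\<not> E u v"
    using assms(3) unfolding complete_graph_def by auto
  have rest: "{..<n} - ({..<n} - {u, v}) = {u, v}" using uv by auto
  have no_edges: "{(x, y). x \<in> {u, v} \<and> y \<in> {u, v} \<and> E x y} = {}"
    using uv simple_graph_irrefl[OF sg] simple_graph_sym[OF sg] by auto
  have "\<not> reach_in E ({..<n} - ({..<n} - {u, v})) u v"
    unfolding rest reach_in_def no_edges using uv by simp
  moreover have "reach_in E {..<n} u v" using conn uv unfolding connected_graph_def by simp
  ultimately have "separator n E ({..<n} - {u, v})" unfolding separator_def using uv by auto
  hence "{card S | S. separator n E S} \<noteq> {}" by auto
  moreover have "finite {card S | S. separator n E S}"
    by (rule finite_subset[of _ "card ` Pow {..<n}"]) (auto simp: separator_def)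
  ultimately have "vertex_connectivity n E \<in> {card S | S. separator n E S}"
    unfolding vertex_connectivity_def by (rule Min_in[rotated])
  thus ?thesis by auto
qed

lemma minimum_separator_minimal:
  assumes sep: "separator n E S" and card: "card S = vertex_connectivity n E"
  shows "minimal_separator n E S"
  unfolding minimal_separator_def
proof (intro conjI allI impI notI)
  fix T assume T: "T \<subset> S" "separator n E T"
  have "finite S" using sep unfolding separator_def by (auto intro: finite_subset)
  hence "card T < card S" using T(1) by (rule psubset_card_mono)
  thus False using vertex_connectivity_le_card[OF T(2)] card by simp
qed (rule sep)

lemma four_cases: "k < (4 :: nat) \<Longrightarrow> k = 0 \<or> k = 1 \<or> k = 2 \<or> k = 3"
  by auto

lemma is_cycle_4:
  assumes "E a b" "E b c" "E c d" "E d a" "distinct [a, b, c, d]" "set [a, b, c, d] \<subseteq> {..<n}"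
  shows "is_cycle n E [a, b, c, d]"
  unfolding is_cycle_def
proof (intro conjI allI impI)
  fix k assume "k < length [a, b, c, d]"
  with four_cases[of k] show "E ([a, b, c, d] ! k) ([a, b, c, d] ! ((k + 1) mod length [a, b, c, d]))"
    using assms by auto
qed (use assms in auto)

lemma has_chord_4D:
  assumes "has_chord E [a, b, c, d]"
  shows "E a c \<or> E c a \<or> E b d \<or> E d b"
proof -
  let ?cs = "[a, b, c, d]"
  obtain i j where ij: "i < length ?cs" "j < length ?cs" "i \<noteq> j" "j \<noteq> (i + 1) mod length ?cs"
    "i \<noteq> (j + 1) mod length ?cs" "E (?cs ! i) (?cs ! j)" using assms unfolding has_chord_def by blast
  have "i < 4" "j < 4" using ij by auto
  from four_cases[OF this(1)] four_cases[OF this(2)] show ?thesis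
    using ij by (elim disjE) simp_all
qed

lemma chordal_separator_universal:
  assumes sg: "simple_graph n E" and chordal: "chordal n E" and sep: "separator n E S"
    and full: "\<And>i j. i \<in> S \<Longrightarrow> j < n \<Longrightarrow> j \<notin> S \<Longrightarrow> E i j"
  shows "\<forall>v\<in>S. universal_vertex n E v"
proof -
  have S: "S \<subseteq> {..<n}" using sep unfolding separator_def by simp
  obtain C D where CD: "C \<noteq> {}" "D \<noteq> {}" "C \<inter> D = {}" "C \<union> D = {..<n} - S"
    and no_edge: "\<And>i j. i \<in> C \<Longrightarrow> j \<in> D \<Longrightarrow> \<not> E i j"
    using separator_partition[OF sep] by blast
  obtain p q where "p \<in> C" "q \<in> D" using CD(1,2) by blast
  hence pq: "p \<in> {..<n} - S" "q \<in> {..<n} - S" "p \<noteq> q" "\<not> E p q" "\<not> E q p"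
    using CD(3,4) no_edge simple_graph_sym[OF sg, of p q] by auto
  have clique: "E i j" if ij: "i \<in> S" "j \<in> S" "i \<noteq> j" for i j
  proof (rule ccontr)
    assume "\<not> E i j"
    have "is_cycle n E [i, p, j, q]"
      using ij pq full[of i p] full[of j p] full[of j q] full[of i q] S
        simple_graph_sym[OF sg]
      by (intro is_cycle_4) auto
    hence "E i j \<or> E j i \<or> E p q \<or> E q p"
      using chordal has_chord_4D unfolding chordal_def by auto
    thus False using \<open>\<not> E i j\<close> pq simple_graph_sym[OF sg] ij S by auto
  qed
  show ?thesis unfolding universal_vertex_def using S full clique by blast
qed

theorem theorem2:
  fixes n :: nat and E :: "nat \<Rightarrow> nat \<Rightarrow> bool"
  assumes "simple_graph n E" and "connected_graph n E" and "chordal n E"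
    and "\<not> complete_graph n E"
  shows "real (vertex_connectivity n E) = algebraic_connectivity n E \<longleftrightarrow>
    (\<exists>S. minimal_separator n E S \<and> (\<forall>v\<in>S. universal_vertex n E v))"
proof -
  note sg = assms(1)
  let ?a = "algebraic_connectivity n E"
  have n: "n \<ge> 2" using assms(4) unfolding complete_graph_def by auto
  obtain S0 where S0: "separator n E S0" "card S0 = vertex_connectivity n E"
    using minimum_separator_exists[OF assms(1,2,4)] by blast
  have a: "rayleigh_lower_bound n E ?a" by (rule algebraic_connectivity_rayleigh_lower_bound[OF sg])
  have a_le: "?a \<le> vertex_connectivity n E"
    using rayleigh_lower_bound_le_card_separator(1)[OF sg S0(1) a] S0(2) by simp
  show ?thesis
  proof
    assume eq: "real (vertex_connectivity n E) = ?a"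
    have "E i j" if "i \<in> S0" "j < n" "j \<notin> S0" for i j
      using rayleigh_lower_bound_le_card_separator(2)[OF sg S0(1) a that] eq S0(2) by fastforce
    thus "\<exists>S. minimal_separator n E S \<and> (\<forall>v\<in>S. universal_vertex n E v)"
      using minimum_separator_minimal[OF S0] chordal_separator_universal[OF sg assms(3) S0(1)] by blast
  next
    assume "\<exists>S. minimal_separator n E S \<and> (\<forall>v\<in>S. universal_vertex n E v)"
    then obtain S where S: "minimal_separator n E S" "\<forall>v\<in>S. universal_vertex n E v" by blast
    have sep: "separator n E S" using S(1) unfolding minimal_separator_def by simp
    hence "S \<subseteq> {..<n}" unfolding separator_def by simp
    hence "card S \<le> ?a"
      using rayleigh_lower_bound_le_algebraic_connectivity[OF sg n] universal_set_rayleigh_lower_bound[OF sg _ S(2)]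
      by blast
    thus "real (vertex_connectivity n E) = ?a" using vertex_connectivity_le_card[OF sep] a_le by simp
  qed
qed

end
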